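(* Let $k\ge 4$ be even and let $G=(V,E)$ be a $k$-uniform cored hypergraph, with Laplacian tensor $\mathcal L$ and signless Laplacian tensor $\mathcal Q$. Then $G$ is odd-bipartite, and hence $\lambda(\mathcal L)=\lambda(\mathcal Q)$.
   Context: A $k$-uniform hypergraph $G=(V,E)$ ($k\ge 3$) is a simple undirected hypergraph with vertex set $V=[n]$ ($n\ge k$) and a nonempty edge set $E$ of $k$-element subsets of $V$. The degree $d_i$ of vertex $i$ is the number of edges containing $i$. $G$ is a cored hypergraph if every edge $e\in E$ contains a vertex of degree one. The adjacency tensor $\mathcal A$ is the order-$k$, dimension-$n$ tensor with $a_{i_1\ldots i_k}=\frac{1}{(k-1)!}$ if $\{i_1,\ldots,i_k\}\in E$ and $0$ otherwise; $\mathcal D$ is the diagonal tensor with $d_{i\ldots i}=d_i$; $\mathcal L=\mathcal D-\mathcal A$ and $\mathcal Q=\mathcal D+\mathcal A$. For a real order-$k$ dimension-$n$ tensor $\mathcal T$ and $\mathbf x\in\mathbb R^n$, $\mathcal T\mathbf x^{k-1}\in\mathbb R^n$ has $i$-th entry $\sum_{i_2,\ldots,i_k\in[n]}t_{ii_2\ldots i_k}x_{i_2}\cdots x_{i_k}$. A real $\lambda$ is an H-eigenvalue of $\mathcal T$ if there is $\mathbf x\in\mathbb R^n\setminus\{0\}$ (an H-eigenvector) with $(\mathcal T\mathbf x^{k-1})_i=\lambda x_i^{k-1}$ for all $i$; $\lambda(\mathcal T)$ denotes the largest H-eigenvalue. For even $k$, $G$ is odd-bipartite if there is a partition $V=V_1\cup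 V_2$ with $V_1,V_2\neq\emptyset$ disjoint such that every edge meets $V_1$ in an odd number of vertices. *)

theory Defs
  imports Complex_Main
begin

text \<open>Vertex set is [n] = {1..n}. A tensor of order k and dimension n is a function
  on index lists (of length k, entries in {1..n}). Vectors in R^n are functions
  nat => real, only their values on {1..n} matter.\<close>

definition k_uniform_hypergraph :: "nat \<Rightarrow> nat \<Rightarrow> nat set set \<Rightarrow> bool" where
  "k_uniform_hypergraph n k E \<longleftrightarrow> 3 \<le> k \<and> k \<le> n \<and> E \<noteq> {} \<and>
     (\<forall>e\<in>E. e \<subseteq> {1..n} \<and> card e = k)"

definition hdegree :: "nat set set \<Rightarrow> nat \<Rightarrow> nat" where
  "hdegree E i = card {e\<in>E. i \<in> e}"

definition cored :: "nat set set \<Rightarrow> bool" where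
  "cored E \<longleftrightarrow> (\<forall>e\<in>E. \<exists>v\<in>e. hdegree E v = 1)"

definition odd_bipartite :: "nat \<Rightarrow> nat set set \<Rightarrow> bool" where
  "odd_bipartite n E \<longleftrightarrow> (\<exists>V1 V2. V1 \<union> V2 = {1..n} \<and> V1 \<inter> V2 = {} \<and>
      V1 \<noteq> {} \<and> V2 \<noteq> {} \<and> (\<forall>e\<in>E. odd (card (e \<inter> V1))))"

definition adj_tensor :: "nat \<Rightarrow> nat set set \<Rightarrow> nat list \<Rightarrow> real" where
  "adj_tensor k E is = (if set is \<in> E then 1 / fact (k - 1) else 0)"

definition deg_tensor :: "nat set set \<Rightarrow> nat list \<Rightarrow> real" where
  "deg_tensor E is = (if is \<noteq> [] \<and> (\<forall>j\<in>set is. j = hd is) then real (hdegree E (hd is)) else 0)"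

definition lap_tensor :: "nat \<Rightarrow> nat set set \<Rightarrow> nat list \<Rightarrow> real" where
  "lap_tensor k E is = deg_tensor E is - adj_tensor k E is"

definition slap_tensor :: "nat \<Rightarrow> nat set set \<Rightarrow> nat list \<Rightarrow> real" where
  "slap_tensor k E is = deg_tensor E is + adj_tensor k E is"

text \<open>(T x^{k-1})_i = sum over i_2..i_k in [n] of t_{i i_2 ... i_k} x_{i_2}...x_{i_k}.\<close>
definition tensor_apply :: "nat \<Rightarrow> nat \<Rightarrow> (nat list \<Rightarrow> real) \<Rightarrow> (nat \<Rightarrow> real) \<Rightarrow> nat \<Rightarrow> real" where
  "tensor_apply n k T x i =
     (\<Sum>js\<in>{js. length js = k - 1 \<and> set js \<subseteq> {1..n}}. T (i # js) * prod_list (map x js))"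

definition is_H_eigenvalue :: "nat \<Rightarrow> nat \<Rightarrow> (nat list \<Rightarrow> real) \<Rightarrow> real \<Rightarrow> bool" where
  "is_H_eigenvalue n k T mu \<longleftrightarrow> (\<exists>x :: nat \<Rightarrow> real. (\<exists>i\<in>{1..n}. x i \<noteq> 0) \<and>
      (\<forall>i\<in>{1..n}. tensor_apply n k T x i = mu * x i ^ (k - 1)))"

text \<open>Largest H-eigenvalue (the set of H-eigenvalues is finite and, for the tensors
  considered, nonempty).\<close>
definition largest_H_eigenvalue :: "nat \<Rightarrow> nat \<Rightarrow> (nat list \<Rightarrow> real) \<Rightarrow> real" where
  "largest_H_eigenvalue n k T = Sup {mu. is_H_eigenvalue n k T mu}"

end

theory Submission
  imports Defs
begin

text \<open>Choosing in every edge a vertex of degree one gives a set V1 meeting each edge in exactly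
  one vertex, so a cored hypergraph is odd-bipartite. For an odd-bipartite hypergraph of even
  uniformity k, the diagonal sign change x_i \<mapsto> s_i x_i with s = -1 on V1 and 1 elsewhere
  leaves the diagonal part of the tensor equations unchanged (as s_i^(k-1) = s_i), while every
  edge term picks up the extra sign (-1)^|e \<inter> V1| = -1. Hence it maps H-eigenvectors of
  Q = D + A to H-eigenvectors of L = D - A for the same eigenvalue and vice versa, so L and Q
  have the same H-eigenvalues.\<close>

lemma hdegree_one_edge_unique:
  assumes "hdegree E v = 1" "e \<in> E" "e' \<in> E" "v \<in> e" "v \<in> e'"
  shows "e = e'"
proof -
  obtain a where "{e\<in>E. v \<in> e} = {a}"
    using assms(1) unfolding hdegree_def by (rule card_1_singletonE)
  then have "e \<in> {a}" "e' \<in> {a}"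
    using assms(2-5) by blast+
  then show ?thesis by simp
qed

lemma cored_odd_bipartite:
  assumes uniform: "k_uniform_hypergraph n k E" and "cored E"
  shows "odd_bipartite n E"
proof -
  define core where "core e = (SOME v. v \<in> e \<and> hdegree E v = 1)" for e
  have core: "core e \<in> e" "hdegree E (core e) = 1" if "e \<in> E" for e
    using someI_ex[of "\<lambda>v. v \<in> e \<and> hdegree E v = 1"] \<open>cored E\<close> that
    unfolding core_def cored_def by blast+
  define V1 where "V1 = core ` E"
  have edge_meets_V1: "e \<inter> V1 = {core e}" if "e \<in> E" for e
    using core that hdegree_one_edge_unique[of E _ e] unfolding V1_def by blast
  have edges: "e \<subseteq> {1..n}" "card e = k" "3 \<le> k" if "e \<in> E" for e
    using uniform that unfolding k_uniform_hypergraph_def by auto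
  obtain e0 where e0: "e0 \<in> E"
    using uniform unfolding k_uniform_hypergraph_def by auto
  have "\<not> e0 \<subseteq> {core e0}"
    using card_mono[of "{core e0}" e0] edges[OF e0] by auto
  then obtain w where "w \<in> e0" "w \<notin> V1"
    using edge_meets_V1[OF e0] by blast
  then have "{1..n} - V1 \<noteq> {}"
    using edges(1)[OF e0] by blast
  moreover have "V1 \<subseteq> {1..n}"
    using core edges(1) unfolding V1_def by blast
  ultimately show ?thesis
    unfolding odd_bipartite_def using e0 edge_meets_V1
    by (intro exI[of _ V1] exI[of _ "{1..n} - V1"]) (auto simp: V1_def)
qed

definition sign_vector :: "nat set \<Rightarrow> nat \<Rightarrow> real" where
  "sign_vector V j = (if j \<in> V then -1 else 1)"

lemma sign_vector_power_odd: "odd m \<Longrightarrow> sign_vector V j ^ m = sign_vector V j"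
  by (simp add: sign_vector_def)

lemma prod_sign_vector: "finite A \<Longrightarrow> (\<Prod>j\<in>A. sign_vector V j) = (-1) ^ card (A \<inter> V)"
  unfolding sign_vector_def by (simp add: prod.If_cases Collect_mem_eq)

lemma prod_list_map_mult:
  "prod_list (map (\<lambda>j. f j * g j) js) = prod_list (map f js) * (prod_list (map g js) :: real)"
  by (induction js) auto

lemma deg_tensor_sign_switch:
  assumes "odd (length js)"
  shows "deg_tensor E (i # js) * prod_list (map (sign_vector V) js)
       = sign_vector V i * deg_tensor E (i # js)"
proof (cases "\<forall>j\<in>set js. j = i")
  case True
  then have "js = replicate (length js) i"
    by (simp add: replicate_length_same)
  then have "prod_list (map (sign_vector V) js) = sign_vector V i"
    using sign_vector_power_odd[OF assms] by (metis map_replicate prod_list_replicate)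
  then show ?thesis by simp
next
  case False
  then show ?thesis by (auto simp: deg_tensor_def)
qed

lemma adj_tensor_sign_switch:
  assumes edges: "\<forall>e\<in>E. card e = k \<and> odd (card (e \<inter> V))" and "length js = k - 1" "1 \<le> k"
  shows "adj_tensor k E (i # js) * prod_list (map (sign_vector V) js)
       = - (sign_vector V i * adj_tensor k E (i # js))"
proof (cases "set (i # js) \<in> E")
  case True
  then have "card (set (i # js)) = length (i # js)"
    using edges assms(2,3) by auto
  then have "distinct (i # js)"
    by (rule card_distinct)
  then have i_new: "i \<notin> set js" and "distinct js" by auto
  then have prod: "prod_list (map (sign_vector V) js) = (-1) ^ card (set js \<inter> V)"
    by (simp add: prod.distinct_set_conv_list[symmetric] prod_sign_vector)
  have "odd (card (insert i (set js) \<inter> V))"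
    using edges True by auto
  then have "prod_list (map (sign_vector V) js) = - sign_vector V i"
    using i_new unfolding prod by (cases "i \<in> V") (auto simp: sign_vector_def Int_insert_left)
  then show ?thesis by simp
next
  case False
  then show ?thesis by (simp add: adj_tensor_def)
qed

lemma tensor_apply_sign_switch:
  assumes uniform: "k_uniform_hypergraph n k E" and "even k"
    and odd_V: "\<forall>e\<in>E. odd (card (e \<inter> V))"
  shows "tensor_apply n k (\<lambda>is. deg_tensor E is - c * adj_tensor k E is)
           (\<lambda>j. sign_vector V j * x j) i
       = sign_vector V i * tensor_apply n k (\<lambda>is. deg_tensor E is + c * adj_tensor k E is) x i"
  unfolding tensor_apply_def sum_distrib_left
proof (rule sum.cong[OF refl])
  fix js assume "js \<in> {js. length js = k - 1 \<and> set js \<subseteq> {1..n}}"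
  then have len: "length js = k - 1" by simp
  have k: "3 \<le> k" "\<forall>e\<in>E. card e = k"
    using uniform unfolding k_uniform_hypergraph_def by auto
  have odd_len: "odd (length js)"
    using len k(1) \<open>even k\<close> by simp
  note deg = deg_tensor_sign_switch[OF odd_len, of E i V]
    and adj = adj_tensor_sign_switch[of E k V js i]
  show "(deg_tensor E (i # js) - c * adj_tensor k E (i # js))
          * prod_list (map (\<lambda>j. sign_vector V j * x j) js)
      = sign_vector V i * ((deg_tensor E (i # js) + c * adj_tensor k E (i # js))
          * prod_list (map x js))"
    using deg adj len k odd_V
    by (simp add: prod_list_map_mult algebra_simps)
qed

lemma H_eigenvalue_sign_switch:
  assumes uniform: "k_uniform_hypergraph n k E" and "even k"
    and odd_V: "\<forall>e\<in>E. odd (card (e \<inter> V))"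
    and "is_H_eigenvalue n k (\<lambda>is. deg_tensor E is + c * adj_tensor k E is) \<mu>"
  shows "is_H_eigenvalue n k (\<lambda>is. deg_tensor E is - c * adj_tensor k E is) \<mu>"
proof -
  obtain x where nonzero: "\<exists>i\<in>{1..n}. x i \<noteq> 0"
    and eigen: "\<forall>i\<in>{1..n}. tensor_apply n k (\<lambda>is. deg_tensor E is + c * adj_tensor k E is) x i
                            = \<mu> * x i ^ (k - 1)"
    using assms(4) unfolding is_H_eigenvalue_def by blast
  define y where "y j = sign_vector V j * x j" for j
  have "odd (k - 1)"
    using \<open>even k\<close> uniform unfolding k_uniform_hypergraph_def by auto
  have "tensor_apply n k (\<lambda>is. deg_tensor E is - c * adj_tensor k E is) y i = \<mu> * y i ^ (k - 1)"
    if "i \<in> {1..n}" for i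
  proof -
    have "tensor_apply n k (\<lambda>is. deg_tensor E is - c * adj_tensor k E is) y i
        = sign_vector V i * (\<mu> * x i ^ (k - 1))"
      unfolding y_def tensor_apply_sign_switch[OF uniform \<open>even k\<close> odd_V] using eigen that by simp
    also have "\<dots> = \<mu> * y i ^ (k - 1)"
      using \<open>odd (k - 1)\<close> by (simp add: y_def power_mult_distrib sign_vector_power_odd)
    finally show ?thesis .
  qed
  moreover have "\<exists>i\<in>{1..n}. y i \<noteq> 0"
    using nonzero by (auto simp: y_def sign_vector_def)
  ultimately show ?thesis
    unfolding is_H_eigenvalue_def by blast
qed

lemma H_eigenvalue_lap_iff_slap:
  assumes "k_uniform_hypergraph n k E" and "even k" and "odd_bipartite n E"
  shows "is_H_eigenvalue n k (lap_tensor k E) \<mu> \<longleftrightarrow> is_H_eigenvalue n k (slap_tensor k E) \<mu>"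
proof -
  obtain V where V: "\<forall>e\<in>E. odd (card (e \<inter> V))"
    using assms(3) unfolding odd_bipartite_def by blast
  have "lap_tensor k E = (\<lambda>is. deg_tensor E is - 1 * adj_tensor k E is)"
    "lap_tensor k E = (\<lambda>is. deg_tensor E is + (-1) * adj_tensor k E is)"
    "slap_tensor k E = (\<lambda>is. deg_tensor E is + 1 * adj_tensor k E is)"
    "slap_tensor k E = (\<lambda>is. deg_tensor E is - (-1) * adj_tensor k E is)"
    by (simp_all add: fun_eq_iff lap_tensor_def slap_tensor_def)
  then show ?thesis
    using H_eigenvalue_sign_switch[OF assms(1,2) V] by metis
qed

theorem proposition3p2:
  fixes n k :: nat and E :: "nat set set"
  assumes "k_uniform_hypergraph n k E"
    and "4 \<le> k" and "even k"
    and "cored E"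
  shows "odd_bipartite n E \<and>
         largest_H_eigenvalue n k (lap_tensor k E) = largest_H_eigenvalue n k (slap_tensor k E)"
proof
  \<comment> \<open>The hypothesis 4 \<le> k is implied by even k and the bound 3 \<le> k built into uniformity.\<close>
  show bipartite: "odd_bipartite n E"
    using cored_odd_bipartite assms(1,4) .
  have "is_H_eigenvalue n k (lap_tensor k E) = is_H_eigenvalue n k (slap_tensor k E)"
    using H_eigenvalue_lap_iff_slap[OF assms(1,3) bipartite] by blast
  then show "largest_H_eigenvalue n k (lap_tensor k E) = largest_H_eigenvalue n k (slap_tensor k E)"
    unfolding largest_H_eigenvalue_def by simp
qed

end
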